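(* Let $n>k\ge1$, $\widetilde{\mathbf P}$ a $k\times(n-k)$ matrix over $\mathbb F_2$ with $r_{\mathbf P}=\mathrm{rank}(\widetilde{\mathbf P}^{\top})$, $\widetilde{\mathbf y}_{\mathrm P}\in\mathbb F_2^{\,n-k}$, and let $\mathcal C=\{[\mathbf x\ \ \mathbf x\widetilde{\mathbf P}]:\mathbf x\in\mathbb F_2^{\,k}\}\subseteq\mathbb F_2^{\,n}$ be the code generated by $[\mathbf I_k\ \ \widetilde{\mathbf P}]$. With $\mathbf E_{\mathbf P},\boldsymbol\Pi_{\mathbf P},\mathbf P_{\mathrm t},\boldsymbol\Pi_{\mathbf Q},\mathbf Q_{\mathrm t},\mathbf e_0$ as in the context, define for $\mathbf e^{\mathrm{pri}}\in\mathbb F_2^{\,r_{\mathbf P}}$ and $\mathbf t\in\mathbb F_2^{\,k-r_{\mathbf P}}$: $$\mathbf e=(\mathbf e^{\mathrm{pri}}\mathbf Q_{\mathrm t}^{\top}\oplus\mathbf e_0)\boldsymbol\Pi_{\mathbf Q}^{\top},\qquad \mathbf z_{\mathbf e}=(\mathbf e\oplus\widetilde{\mathbf y}_{\mathrm P})\mathbf E_{\mathbf P}^{\top},$$ $\mathbf x_{\mathbf e}$ equal to the first $k$ entries of $\mathbf z_{\mathbf e}$ if $k\le n-k$ and to $\mathbf z_{\mathbf e}$ padded with $2k-n$ trailing zeros if $k>n-k$, and $$\Phi(\mathbf e^{\mathrm{pri}},\mathbf t)=\big[(\mathbf x_{\mathbf e}\oplus\mathbf t\mathbf P_{\mathrm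 t}^{\top})\boldsymbol\Pi_{\mathbf P}^{\top}\ \ \ \widetilde{\mathbf y}_{\mathrm P}\oplus\mathbf e\big]\in\mathbb F_2^{\,n}.$$ Then $\Phi$ is a bijection from $\mathbb F_2^{\,r_{\mathbf P}}\times\mathbb F_2^{\,k-r_{\mathbf P}}$ onto $\mathcal C$. In particular the set of codeword estimates obtained from all valid TEPs and all extended choices is the whole code, of size $2^k$.
   Context: All vectors are row vectors over $\mathbb F_2$; $\oplus$ is addition over $\mathbb F_2$. $\mathbf E_{\mathbf P}$ is an invertible $(n-k)\times(n-k)$ matrix and $\boldsymbol\Pi_{\mathbf P}$ a $k\times k$ permutation matrix with $\mathbf E_{\mathbf P}\widetilde{\mathbf P}^{\top}\boldsymbol\Pi_{\mathbf P}=\begin{bmatrix}\mathbf I_{r_{\mathbf P}}&\mathbf R\\ \mathbf 0&\mathbf 0\end{bmatrix}$ with $\mathbf R$ of size $r_{\mathbf P}\times(k-r_{\mathbf P})$, and $\mathbf P_{\mathrm t}=\begin{bmatrix}\mathbf R\\ \mathbf I_{k-r_{\mathbf P}}\end{bmatrix}$. Let $r_{\mathbf Q}=n-k-r_{\mathbf P}$. If $r_{\mathbf P}<n-k$: $\mathbf Q$ is the matrix of the last $r_{\mathbf Q}$ rows of $\mathbf E_{\mathbf P}$; $\mathbf E_{\mathbf Q}$ is an invertible $r_{\mathbf Q}\times r_{\mathbf Q}$ matrix and $\boldsymbol\Pi_{\mathbf Q}$ an $(n-k)\times(n-k)$ permutation matrix with $\mathbf E_{\mathbf Q}\mathbf Q\boldsymbol\Pi_{\mathbf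 Q}=[\mathbf I_{r_{\mathbf Q}}\ \ \mathbf Q_{\mathrm r}]$; $\mathbf Q_{\mathrm t}=\begin{bmatrix}\mathbf Q_{\mathrm r}\\ \mathbf I_{r_{\mathbf P}}\end{bmatrix}$; $\mathbf e_0=[\,\widetilde{\mathbf y}_{\mathrm P}\mathbf Q^{\top}\mathbf E_{\mathbf Q}^{\top}\ \ \mathbf 0_{r_{\mathbf P}}\,]$. If $r_{\mathbf P}=n-k$: $\mathbf Q_{\mathrm t}=\boldsymbol\Pi_{\mathbf Q}=\mathbf I_{n-k}$ and $\mathbf e_0=\mathbf 0$. The vector $\mathbf e^{\mathrm{pri}}$ is called the primary TEP and $\mathbf t$ plays the role of the extended TEP. *)

theory Defs
  imports "HOL-Library.Z2" "Jordan_Normal_Form.DL_Rank" "HOL-Combinatorics.Permutations"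
begin

definition vm :: "'a :: semiring_0 vec \<Rightarrow> 'a mat \<Rightarrow> 'a vec" (infixl \<open>\<^sub>v*\<close> 70) where
  "v \<^sub>v* A = transpose_mat A *\<^sub>v v"

definition append_cols_mat :: "'a :: zero mat \<Rightarrow> 'a mat \<Rightarrow> 'a mat" where
  "append_cols_mat A B = four_block_mat A B (0\<^sub>m 0 (dim_col A)) (0\<^sub>m 0 (dim_col B))"

definition perm_matrix :: "nat \<Rightarrow> 'a :: {zero,one} mat \<Rightarrow> bool" where
  "perm_matrix m M \<longleftrightarrow> M \<in> carrier_mat m m \<and>
     (\<exists>p. p permutes {..<m} \<and> (\<forall>i<m. \<forall>j<m. M $$ (i,j) = (if p i = j then 1 else 0)))"

definition sys_code :: "nat \<Rightarrow> 'a :: semiring_0 mat \<Rightarrow> 'a vec set" where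
  "sys_code k P = {x @\<^sub>v (x \<^sub>v* P) | x. x \<in> carrier_vec k}"

end

(*
  Over F_2, the relation E_Q Q Pi_Q = [I Q_r] makes the offset e_0 exactly the correction that
  cancels Q_r e^pri, so every error pattern e satisfies Q e = Q y. Hence z_e = E_P (e + y)
  vanishes below row r_P, and because E_P Ptil^T Pi_P = [I R; 0 0] the information word
  x = Pi_P (x_e + P_t t) satisfies E_P Ptil^T x = z_e, i.e. x Ptil = e + y: every Phi (e^pri, t) is a
  codeword. Phi is injective, since e^pri -> e is injective (Pi_Q is invertible and Q_t contains
  an identity block) and t -> x is injective for fixed e^pri (P_t contains an identity block).
  Domain and code both have 2^k elements, so Phi is a bijection.
*)
theory Submission
  imports Defs
begin

lemma vm_transpose [simp]: "v \<^sub>v* transpose_mat A = A *\<^sub>v v"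
  unfolding vm_def by simp

lemma bit_vec_add_self: "v \<in> carrier_vec n \<Longrightarrow> v + v = (0\<^sub>v n :: bit vec)"
proof (intro eq_vecI)
  fix i assume "v \<in> carrier_vec n" "i < dim_vec (0\<^sub>v n :: bit vec)"
  then show "(v + v) $ i = 0\<^sub>v n $ i" by (cases "v $ i") auto
qed auto

lemma bit_vec_add_add_cancel:
  assumes "a \<in> carrier_vec n" "b \<in> carrier_vec n"
  shows "a + b + b = (a :: bit vec)"
  using assms by (simp add: assoc_add_vec[of a n b b] bit_vec_add_self)

lemma add_vec_left_cancel:
  fixes a b c :: "'a :: group_add vec"
  assumes "a \<in> carrier_vec n" "b \<in> carrier_vec n" "c \<in> carrier_vec n" "a + b = a + c"
  shows "b = c"
proof (rule eq_vecI)
  fix i assume "i < dim_vec c"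
  moreover have "(a + b) $ i = (a + c) $ i"
    by (simp only: assms(4))
  ultimately show "b $ i = c $ i"
    using assms(1-3) by simp
qed (use assms in simp)

lemma inj_on_card_eq_bij_betw:
  assumes "inj_on f A" "f ` A \<subseteq> B" "finite B" "card A = card B"
  shows "bij_betw f A B"
  using assms card_subset_eq[of B "f ` A"] by (simp add: bij_betw_def card_image)

lemma card_carrier_vec:
  assumes "finite (UNIV :: 'a set)"
  shows "card (carrier_vec n :: 'a vec set) = card (UNIV :: 'a set) ^ n"
proof -
  let ?L = "{xs :: 'a list. set xs \<subseteq> UNIV \<and> length xs = n}"
  have "carrier_vec n = vec_of_list ` ?L"
  proof
    show "carrier_vec n \<subseteq> vec_of_list ` ?L"
    proof
      fix v :: "'a vec" assume "v \<in> carrier_vec n"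
      then have "list_of_vec v \<in> ?L" by auto
      then show "v \<in> vec_of_list ` ?L"
        by (rule image_eqI[rotated]) (simp add: vec_list)
    qed
    show "vec_of_list ` ?L \<subseteq> carrier_vec n"
      by (auto intro: carrier_vecI)
  qed
  moreover have "inj_on vec_of_list ?L"
    by (metis inj_onI list_vec)
  ultimately show ?thesis
    using card_lists_length_eq[OF assms, of n] by (simp add: card_image)
qed

lemma UNIV_bit: "(UNIV :: bit set) = {0, 1}"
  using bit.exhaust by auto

lemma card_bit_vec_carrier: "card (carrier_vec n :: bit vec set) = 2 ^ n"
  by (simp add: card_carrier_vec UNIV_bit numeral_2_eq_2)

lemma card_sys_code:
  fixes P :: "'a :: semiring_0 mat"
  shows "card (sys_code k P) = card (carrier_vec k :: 'a vec set)"
proof -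
  have "sys_code k P = (\<lambda>x. x @\<^sub>v (x \<^sub>v* P)) ` carrier_vec k"
    unfolding sys_code_def by blast
  moreover have "inj_on (\<lambda>x. x @\<^sub>v (x \<^sub>v* P)) (carrier_vec k)"
    by (rule inj_onI) (metis append_vec_eq)
  ultimately show ?thesis
    by (simp add: card_image)
qed

lemma invertible_mat_mult_vec_cancel:
  fixes A :: "'a :: semiring_1 mat"
  assumes A: "A \<in> carrier_mat n n" "invertible_mat A"
    and u: "u \<in> carrier_vec n" and v: "v \<in> carrier_vec n"
    and eq: "A *\<^sub>v u = A *\<^sub>v v"
  shows "u = v"
proof -
  obtain B where AB: "A * B = 1\<^sub>m n" and BA: "B * A = 1\<^sub>m (dim_row B)"
    using A unfolding invertible_mat_def inverts_mat_def by auto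
  have B: "B \<in> carrier_mat n n"
    using arg_cong[OF AB, of dim_col] arg_cong[OF BA, of dim_col] A by auto
  have "u = (B * A) *\<^sub>v u"
    using B BA u by simp
  also have "\<dots> = (B * A) *\<^sub>v v"
    using A(1) B u v eq by (simp add: assoc_mult_mat_vec)
  also have "\<dots> = v"
    using B BA v by simp
  finally show ?thesis .
qed

lemma perm_matrix_invertible:
  fixes M :: "'a :: field mat"
  assumes "perm_matrix m M"
  shows "invertible_mat M"
proof -
  obtain p where M: "M \<in> carrier_mat m m" and p: "p permutes {..<m}"
    and ent: "\<And>i j. i < m \<Longrightarrow> j < m \<Longrightarrow> M $$ (i, j) = (if p i = j then 1 else 0)"
    using assms unfolding perm_matrix_def by blast
  have right_inv: "M * transpose_mat M = 1\<^sub>m m"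
  proof (rule eq_matI)
    fix i j assume "i < dim_row (1\<^sub>m m :: 'a mat)" "j < dim_col (1\<^sub>m m :: 'a mat)"
    then have i: "i < m" and j: "j < m" by auto
    have pi: "p i < m"
      using permutes_in_image[OF p, of i] i by simp
    have "(M * transpose_mat M) $$ (i, j) = (\<Sum>l<m. M $$ (i, l) * M $$ (j, l))"
      using M i j by (simp add: scalar_prod_def atLeast0LessThan)
    also have "\<dots> = (\<Sum>l<m. if p i = l then (if p j = l then 1 else 0) else 0)"
      using i j by (intro sum.cong) (simp_all add: ent)
    also have "\<dots> = (if p j = p i then 1 else 0)"
      using pi by simp
    also have "\<dots> = 1\<^sub>m m $$ (i, j)"
      using i j inj_eq[OF permutes_inj[OF p], of j i] by auto
    finally show "(M * transpose_mat M) $$ (i, j) = 1\<^sub>m m $$ (i, j)" .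
  qed (use M in auto)
  moreover have "transpose_mat M * M = 1\<^sub>m m"
    using M by (intro mat_mult_left_right_inverse[OF M _ right_inv]) simp
  ultimately show ?thesis
    using M unfolding invertible_mat_def inverts_mat_def by auto
qed

lemma zero_mat_mult_vec: "v \<in> carrier_vec c \<Longrightarrow> 0\<^sub>m h c *\<^sub>v v = (0\<^sub>v h :: 'a :: semiring_0 vec)"
  by (intro eq_vecI) (auto simp: scalar_prod_def)

lemma append_rows_one_mult_vec:
  fixes A :: "'a :: semiring_1 mat"
  assumes "A \<in> carrier_mat h c" "v \<in> carrier_vec c"
  shows "(A @\<^sub>r 1\<^sub>m c) *\<^sub>v v = (A *\<^sub>v v) @\<^sub>v v"
  using mat_mult_append[OF assms(1) one_carrier_mat assms(2)] assms(2) by simp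

lemma append_rows_one_mult_vec_cancel:
  fixes A :: "'a :: semiring_1 mat"
  assumes "A \<in> carrier_mat h c" "u \<in> carrier_vec c" "v \<in> carrier_vec c"
    and "(A @\<^sub>r 1\<^sub>m c) *\<^sub>v u = (A @\<^sub>r 1\<^sub>m c) *\<^sub>v v"
  shows "u = v"
  using assms append_vec_eq[OF mult_mat_vec_carrier[OF assms(1,2)] mult_mat_vec_carrier[OF assms(1,3)]]
  by (simp add: append_rows_one_mult_vec)

lemma append_cols_one_mult_vec:
  fixes A :: "'a :: semiring_1 mat"
  assumes "A \<in> carrier_mat h r" "u \<in> carrier_vec h" "w \<in> carrier_vec r"
  shows "append_cols_mat (1\<^sub>m h) A *\<^sub>v (u @\<^sub>v w) = u + A *\<^sub>v w"
proof -
  have "append_cols_mat (1\<^sub>m h) A *\<^sub>v (u @\<^sub>v w) = (u + A *\<^sub>v w) @\<^sub>v 0\<^sub>v 0"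
    unfolding append_cols_mat_def using assms
    by (subst four_block_mat_mult_vec[of _ h h _ r _ 0]) (auto simp: zero_mat_mult_vec)
  then show ?thesis
    by (auto intro: eq_vecI)
qed

lemma reduced_block_mult_vec:
  fixes R :: "'a :: semiring_1 mat"
  assumes "R \<in> carrier_mat r c" "u \<in> carrier_vec r" "w \<in> carrier_vec c"
  shows "four_block_mat (1\<^sub>m r) R (0\<^sub>m h r) (0\<^sub>m h c) *\<^sub>v (u @\<^sub>v w) = (u + R *\<^sub>v w) @\<^sub>v 0\<^sub>v h"
  using assms by (subst four_block_mat_mult_vec[of _ r r _ c _ h]) (auto simp: zero_mat_mult_vec)

lemma mult_vec_split_rows:
  assumes "E \<in> carrier_mat (r + h) m" "v \<in> carrier_vec m"
  shows "E *\<^sub>v v = vec_first (E *\<^sub>v v) r @\<^sub>v (mat h m (\<lambda>(i, j). E $$ (r + i, j)) *\<^sub>v v)"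
proof (rule eq_vecI)
  fix i assume "i < dim_vec (vec_first (E *\<^sub>v v) r @\<^sub>v (mat h m (\<lambda>(i, j). E $$ (r + i, j)) *\<^sub>v v))"
  with assms show "(E *\<^sub>v v) $ i = (vec_first (E *\<^sub>v v) r @\<^sub>v (mat h m (\<lambda>(i, j). E $$ (r + i, j)) *\<^sub>v v)) $ i"
    by (auto simp: vec_first_def scalar_prod_def)
qed (use assms in simp)

lemma resize_zero_padded:
  fixes u :: "'a :: zero vec"
  assumes "u \<in> carrier_vec r" "r \<le> k" "r \<le> m"
  shows "(if k \<le> m then vec_first (u @\<^sub>v 0\<^sub>v (m - r)) k else (u @\<^sub>v 0\<^sub>v (m - r)) @\<^sub>v 0\<^sub>v (k - m))
    = u @\<^sub>v 0\<^sub>v (k - r)"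
  using assms by (intro eq_vecI) (auto simp: vec_first_def)

lemma append_rows_one_affine_cancel:
  fixes M A :: "'a :: ring_1 mat"
  assumes M: "M \<in> carrier_mat k k" "invertible_mat M" and A: "A \<in> carrier_mat h c" and k: "h + c = k"
    and a: "a \<in> carrier_vec k" and t1: "t1 \<in> carrier_vec c" and t2: "t2 \<in> carrier_vec c"
    and eq: "M *\<^sub>v (a + (A @\<^sub>r 1\<^sub>m c) *\<^sub>v t1) = M *\<^sub>v (a + (A @\<^sub>r 1\<^sub>m c) *\<^sub>v t2)"
  shows "t1 = t2"
proof -
  have A1: "A @\<^sub>r 1\<^sub>m c \<in> carrier_mat k c"
    using carrier_append_rows[OF A one_carrier_mat[of c]] k by simp
  have "a + (A @\<^sub>r 1\<^sub>m c) *\<^sub>v t1 = a + (A @\<^sub>r 1\<^sub>m c) *\<^sub>v t2"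
    by (rule invertible_mat_mult_vec_cancel[OF M add_carrier_vec[OF a mult_mat_vec_carrier[OF A1 t1]]
          add_carrier_vec[OF a mult_mat_vec_carrier[OF A1 t2]] eq])
  then have "(A @\<^sub>r 1\<^sub>m c) *\<^sub>v t1 = (A @\<^sub>r 1\<^sub>m c) *\<^sub>v t2"
    by (rule add_vec_left_cancel[OF a mult_mat_vec_carrier[OF A1 t1] mult_mat_vec_carrier[OF A1 t2]])
  then show ?thesis
    by (rule append_rows_one_mult_vec_cancel[OF A t1 t2])
qed

lemma error_pattern_syndrome:
  fixes EQ Q PiQ Qr :: "bit mat"
  assumes EQ: "EQ \<in> carrier_mat h h" "invertible_mat EQ"
    and Q: "Q \<in> carrier_mat h m" and PiQ: "PiQ \<in> carrier_mat m m" and Qr: "Qr \<in> carrier_mat h r"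
    and m: "m = h + r"
    and red: "EQ * Q * PiQ = append_cols_mat (1\<^sub>m h) Qr"
    and epri: "epri \<in> carrier_vec r" and y: "y \<in> carrier_vec m"
  shows "Q *\<^sub>v (PiQ *\<^sub>v ((Qr @\<^sub>r 1\<^sub>m r) *\<^sub>v epri + ((EQ *\<^sub>v (Q *\<^sub>v y)) @\<^sub>v 0\<^sub>v r))) = Q *\<^sub>v y"
proof -
  let ?s = "EQ *\<^sub>v (Q *\<^sub>v y)" and ?q = "Qr *\<^sub>v epri"
  have s: "?s \<in> carrier_vec h" and q: "?q \<in> carrier_vec h"
    using EQ Q Qr epri y by auto
  have w: "(Qr @\<^sub>r 1\<^sub>m r) *\<^sub>v epri + (?s @\<^sub>v 0\<^sub>v r) = (?q + ?s) @\<^sub>v epri"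
    using append_vec_add[OF q s epri zero_carrier_vec] by (simp add: append_rows_one_mult_vec[OF Qr epri] epri)
  have wc: "(?q + ?s) @\<^sub>v epri \<in> carrier_vec m"
    using q s epri m by simp
  have "EQ *\<^sub>v (Q *\<^sub>v (PiQ *\<^sub>v ((?q + ?s) @\<^sub>v epri))) = (EQ * Q * PiQ) *\<^sub>v ((?q + ?s) @\<^sub>v epri)"
    by (simp only: assoc_mult_mat_vec[OF mult_carrier_mat[OF EQ(1) Q] PiQ wc]
        assoc_mult_mat_vec[OF EQ(1) Q mult_mat_vec_carrier[OF PiQ wc]])
  also have "\<dots> = ?q + ?s + ?q"
    unfolding red using append_cols_one_mult_vec[OF Qr _ epri] q s by simp
  also have "\<dots> = ?s + ?q + ?q"
    by (simp only: comm_add_vec[OF q s])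
  also have "\<dots> = EQ *\<^sub>v (Q *\<^sub>v y)"
    by (rule bit_vec_add_add_cancel[OF s q])
  finally show ?thesis
    unfolding w
    by (rule invertible_mat_mult_vec_cancel[OF EQ mult_mat_vec_carrier[OF Q mult_mat_vec_carrier[OF PiQ wc]]
          mult_mat_vec_carrier[OF Q y]])
qed

lemma error_pattern_map:
  fixes Q EQ PiQ Qr :: "bit mat" and y :: "bit vec"
  assumes r: "r \<le> m" and Q: "Q \<in> carrier_mat (m - r) m" and y: "y \<in> carrier_vec m"
    and Qcase: "r < m \<Longrightarrow> EQ \<in> carrier_mat (m - r) (m - r) \<and> invertible_mat EQ \<and>
      perm_matrix m PiQ \<and> Qr \<in> carrier_mat (m - r) r \<and> EQ * Q * PiQ = append_cols_mat (1\<^sub>m (m - r)) Qr"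
    and Qfull: "r = m \<Longrightarrow> PiQ = 1\<^sub>m m"
  defines "Qt \<equiv> if r < m then Qr @\<^sub>r 1\<^sub>m r else 1\<^sub>m m"
    and "e0 \<equiv> if r < m then (EQ *\<^sub>v (Q *\<^sub>v y)) @\<^sub>v 0\<^sub>v r else 0\<^sub>v m"
  shows "inj_on (\<lambda>epri. PiQ *\<^sub>v (Qt *\<^sub>v epri + e0)) (carrier_vec r) \<and>
    (\<forall>epri \<in> carrier_vec r. PiQ *\<^sub>v (Qt *\<^sub>v epri + e0) \<in> carrier_vec m \<and>
      Q *\<^sub>v (PiQ *\<^sub>v (Qt *\<^sub>v epri + e0)) = Q *\<^sub>v y)"
proof (cases "r < m")
  case True
  then have EQ: "EQ \<in> carrier_mat (m - r) (m - r)" "invertible_mat EQ" and PiQ: "perm_matrix m PiQ"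
    and Qr: "Qr \<in> carrier_mat (m - r) r" and red: "EQ * Q * PiQ = append_cols_mat (1\<^sub>m (m - r)) Qr"
    using Qcase by auto
  have PiQ_c: "PiQ \<in> carrier_mat m m"
    using PiQ unfolding perm_matrix_def by simp
  have Qt: "Qt \<in> carrier_mat m r"
    using True r carrier_append_rows[OF Qr one_carrier_mat[of r]] unfolding Qt_def by simp
  have e0: "e0 \<in> carrier_vec m"
    using True r append_carrier_vec[OF mult_mat_vec_carrier[OF EQ(1) mult_mat_vec_carrier[OF Q y]] zero_carrier_vec[of r]]
    unfolding e0_def by simp
  have "inj_on (\<lambda>epri. PiQ *\<^sub>v (Qt *\<^sub>v epri + e0)) (carrier_vec r)"
  proof (rule inj_onI)
    fix u v assume u: "u \<in> carrier_vec r" and v: "v \<in> carrier_vec r"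
      and "PiQ *\<^sub>v (Qt *\<^sub>v u + e0) = PiQ *\<^sub>v (Qt *\<^sub>v v + e0)"
    then have "PiQ *\<^sub>v (e0 + (Qr @\<^sub>r 1\<^sub>m r) *\<^sub>v u) = PiQ *\<^sub>v (e0 + (Qr @\<^sub>r 1\<^sub>m r) *\<^sub>v v)"
      using comm_add_vec[OF mult_mat_vec_carrier[OF Qt u] e0] comm_add_vec[OF mult_mat_vec_carrier[OF Qt v] e0] True
      unfolding Qt_def by simp
    then show "u = v"
      by (intro append_rows_one_affine_cancel[OF PiQ_c perm_matrix_invertible[OF PiQ] Qr _ e0 u v]) (use r in simp_all)
  qed
  moreover have "PiQ *\<^sub>v (Qt *\<^sub>v epri + e0) \<in> carrier_vec m" if "epri \<in> carrier_vec r" for epri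
    using mult_mat_vec_carrier[OF PiQ_c add_carrier_vec[OF mult_mat_vec_carrier[OF Qt that] e0]] .
  moreover have "Q *\<^sub>v (PiQ *\<^sub>v (Qt *\<^sub>v epri + e0)) = Q *\<^sub>v y" if "epri \<in> carrier_vec r" for epri
    using error_pattern_syndrome[OF EQ Q PiQ_c Qr _ red that y] True r unfolding Qt_def e0_def by simp
  ultimately show ?thesis by blast
next
  case False
  with r have "r = m" by simp
  then have "PiQ *\<^sub>v (Qt *\<^sub>v epri + e0) = epri" if "epri \<in> carrier_vec r" for epri
    using Qfull that unfolding Qt_def e0_def by simp
  moreover have "Q *\<^sub>v v = Q *\<^sub>v y" for v
    using Q \<open>r = m\<close> by (intro eq_vecI) auto
  ultimately show ?thesis
    using \<open>r = m\<close> by (simp add: inj_on_def)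
qed

lemma reencoding_parity:
  fixes EP Ptil PiP R :: "bit mat"
  assumes EP: "EP \<in> carrier_mat m m" "invertible_mat EP"
    and Ptil: "Ptil \<in> carrier_mat k m" and PiP: "PiP \<in> carrier_mat k k"
    and R: "R \<in> carrier_mat r (k - r)" and rk: "r \<le> k"
    and red: "EP * transpose_mat Ptil * PiP = four_block_mat (1\<^sub>m r) R (0\<^sub>m (m - r) r) (0\<^sub>m (m - r) (k - r))"
    and s: "s \<in> carrier_vec m" and u: "u \<in> carrier_vec r" and Es: "EP *\<^sub>v s = u @\<^sub>v 0\<^sub>v (m - r)"
    and t: "t \<in> carrier_vec (k - r)"
  shows "transpose_mat Ptil *\<^sub>v (PiP *\<^sub>v ((u @\<^sub>v 0\<^sub>v (k - r)) + (R @\<^sub>r 1\<^sub>m (k - r)) *\<^sub>v t)) = s"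
proof -
  let ?a = "(u @\<^sub>v 0\<^sub>v (k - r)) + (R @\<^sub>r 1\<^sub>m (k - r)) *\<^sub>v t" and ?v = "u + R *\<^sub>v t"
  have v: "?v \<in> carrier_vec r"
    using u R t by simp
  have a: "?a = ?v @\<^sub>v t"
    using append_vec_add[OF u mult_mat_vec_carrier[OF R t] zero_carrier_vec t]
    by (simp add: append_rows_one_mult_vec[OF R t] t)
  have ac: "?a \<in> carrier_vec k"
    unfolding a using append_carrier_vec[OF v t] rk by simp
  have "EP *\<^sub>v (transpose_mat Ptil *\<^sub>v (PiP *\<^sub>v ?a)) = (EP * transpose_mat Ptil * PiP) *\<^sub>v ?a"
    by (simp only: assoc_mult_mat_vec[OF mult_carrier_mat[OF EP(1) transpose_carrier_mat[THEN iffD2, OF Ptil]] PiP ac]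
        assoc_mult_mat_vec[OF EP(1) transpose_carrier_mat[THEN iffD2, OF Ptil] mult_mat_vec_carrier[OF PiP ac]])
  also have "\<dots> = (?v + R *\<^sub>v t) @\<^sub>v 0\<^sub>v (m - r)"
    unfolding red a by (rule reduced_block_mult_vec[OF R v t])
  also have "\<dots> = EP *\<^sub>v s"
    unfolding bit_vec_add_add_cancel[OF u mult_mat_vec_carrier[OF R t]] Es ..
  finally show ?thesis
    by (rule invertible_mat_mult_vec_cancel[OF EP mult_mat_vec_carrier[OF transpose_carrier_mat[THEN iffD2, OF Ptil]
          mult_mat_vec_carrier[OF PiP ac]] s])
qed

lemma reencoding_inj_on:
  fixes PiP R :: "'a :: ring_1 mat"
  assumes PiP: "PiP \<in> carrier_mat k k" "invertible_mat PiP"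
    and R: "R \<in> carrier_mat r (k - r)" and rk: "r \<le> k" and y: "y \<in> carrier_vec m"
    and e_inj: "inj_on e (carrier_vec r)" and e: "\<And>epri. epri \<in> carrier_vec r \<Longrightarrow> e epri \<in> carrier_vec m"
    and xe: "\<And>epri. epri \<in> carrier_vec r \<Longrightarrow> xe epri \<in> carrier_vec k"
  shows "inj_on (\<lambda>(epri, t). (PiP *\<^sub>v (xe epri + (R @\<^sub>r 1\<^sub>m (k - r)) *\<^sub>v t)) @\<^sub>v (y + e epri))
    (carrier_vec r \<times> carrier_vec (k - r))"
proof (rule inj_onI, clarsimp)
  fix e1 t1 e2 t2 assume e1: "e1 \<in> carrier_vec r" and t1: "t1 \<in> carrier_vec (k - r)"
    and e2: "e2 \<in> carrier_vec r" and t2: "t2 \<in> carrier_vec (k - r)"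
    and eq: "PiP *\<^sub>v (xe e1 + (R @\<^sub>r 1\<^sub>m (k - r)) *\<^sub>v t1) @\<^sub>v (y + e e1)
      = PiP *\<^sub>v (xe e2 + (R @\<^sub>r 1\<^sub>m (k - r)) *\<^sub>v t2) @\<^sub>v (y + e e2)"
  have "PiP *\<^sub>v v \<in> carrier_vec k" for v
    using PiP(1) by (intro carrier_vecI) simp
  then have x_eq: "PiP *\<^sub>v (xe e1 + (R @\<^sub>r 1\<^sub>m (k - r)) *\<^sub>v t1) = PiP *\<^sub>v (xe e2 + (R @\<^sub>r 1\<^sub>m (k - r)) *\<^sub>v t2)"
    and "y + e e1 = y + e e2"
    using eq append_vec_eq by blast+
  then have e12: "e2 = e1"
    using add_vec_left_cancel[OF y e[OF e1] e[OF e2]] inj_onD[OF e_inj _ e1 e2] by simp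
  have "t1 = t2"
    using x_eq unfolding e12
    by (intro append_rows_one_affine_cancel[OF PiP R _ xe[OF e1] t1 t2]) (use rk in simp_all)
  with e12 show "e1 = e2 \<and> t1 = t2" by simp
qed

lemma systematic_reencoding_bij_betw:
  fixes EP Ptil PiP R :: "bit mat" and y :: "bit vec" and e xe :: "bit vec \<Rightarrow> bit vec"
  assumes EP: "EP \<in> carrier_mat m m" "invertible_mat EP"
    and Ptil: "Ptil \<in> carrier_mat k m" and PiP: "perm_matrix k PiP"
    and R: "R \<in> carrier_mat r (k - r)" and rk: "r \<le> k"
    and red: "EP * transpose_mat Ptil * PiP = four_block_mat (1\<^sub>m r) R (0\<^sub>m (m - r) r) (0\<^sub>m (m - r) (k - r))"
    and y: "y \<in> carrier_vec m"
    and e_inj: "inj_on e (carrier_vec r)" and e: "\<And>epri. epri \<in> carrier_vec r \<Longrightarrow> e epri \<in> carrier_vec m"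
    and tail: "\<And>epri. epri \<in> carrier_vec r \<Longrightarrow>
      EP *\<^sub>v (e epri + y) = vec_first (EP *\<^sub>v (e epri + y)) r @\<^sub>v 0\<^sub>v (m - r)"
    and xe: "\<And>epri. epri \<in> carrier_vec r \<Longrightarrow> xe epri = vec_first (EP *\<^sub>v (e epri + y)) r @\<^sub>v 0\<^sub>v (k - r)"
  shows "bij_betw (\<lambda>(epri, t). (PiP *\<^sub>v (xe epri + (R @\<^sub>r 1\<^sub>m (k - r)) *\<^sub>v t)) @\<^sub>v (y + e epri))
    (carrier_vec r \<times> carrier_vec (k - r)) (sys_code k Ptil)"
proof (rule inj_on_card_eq_bij_betw)
  have PiP_c: "PiP \<in> carrier_mat k k"
    using PiP unfolding perm_matrix_def by simp
  have xe_c: "xe epri \<in> carrier_vec k" if "epri \<in> carrier_vec r" for epri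
    unfolding xe[OF that] using rk by (intro carrier_vecI) simp
  show "inj_on (\<lambda>(epri, t). (PiP *\<^sub>v (xe epri + (R @\<^sub>r 1\<^sub>m (k - r)) *\<^sub>v t)) @\<^sub>v (y + e epri))
    (carrier_vec r \<times> carrier_vec (k - r))"
    by (rule reencoding_inj_on[OF PiP_c perm_matrix_invertible[OF PiP] R rk y e_inj e xe_c])
  show "(\<lambda>(epri, t). (PiP *\<^sub>v (xe epri + (R @\<^sub>r 1\<^sub>m (k - r)) *\<^sub>v t)) @\<^sub>v (y + e epri))
    ` (carrier_vec r \<times> carrier_vec (k - r)) \<subseteq> sys_code k Ptil"
  proof (rule image_subsetI, clarify)
    fix epri t :: "bit vec" assume epri: "epri \<in> carrier_vec r" and t: "t \<in> carrier_vec (k - r)"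
    let ?x = "PiP *\<^sub>v (xe epri + (R @\<^sub>r 1\<^sub>m (k - r)) *\<^sub>v t)"
    have "?x \<^sub>v* Ptil = e epri + y"
      using reencoding_parity[OF EP Ptil PiP_c R rk red _ vec_first_carrier tail[OF epri] t] e[OF epri] y
      unfolding vm_def xe[OF epri] by simp
    moreover have "?x \<in> carrier_vec k"
      using PiP_c by (intro carrier_vecI) simp
    ultimately show "?x @\<^sub>v (y + e epri) \<in> sys_code k Ptil"
      unfolding sys_code_def using comm_add_vec[OF e[OF epri] y] by force
  qed
  show "finite (sys_code k Ptil)"
    by (rule card_ge_0_finite) (simp add: card_sys_code card_bit_vec_carrier)
  show "card (carrier_vec r \<times> carrier_vec (k - r) :: (bit vec \<times> bit vec) set) = card (sys_code k Ptil)"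
    using rk by (simp add: card_cartesian_product card_bit_vec_carrier card_sys_code flip: power_add)
qed

theorem mainTheorem5:
  fixes n k r :: nat
    and Ptil :: "bit mat" and y :: "bit vec"
    and EP PiP R EQ PiQ Qr :: "bit mat"
  assumes nk: "n > k" "k \<ge> 1"
    and Ptil: "Ptil \<in> carrier_mat k (n - k)"
    and y: "y \<in> carrier_vec (n - k)"
    and rank: "r = vec_space.rank (n - k) (transpose_mat Ptil)"
    and EP: "EP \<in> carrier_mat (n - k) (n - k)" "invertible_mat EP"
    and PiP: "perm_matrix k PiP"
    and R: "R \<in> carrier_mat r (k - r)"
    and EPblock: "EP * transpose_mat Ptil * PiP =
        four_block_mat (1\<^sub>m r) R (0\<^sub>m (n - k - r) r) (0\<^sub>m (n - k - r) (k - r))"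
  defines "rQ \<equiv> n - k - r"
    defines "Q \<equiv> mat (n - k - r) (n - k) (\<lambda>(i, j). EP $$ (r + i, j))"
    defines "Pt \<equiv> R @\<^sub>r 1\<^sub>m (k - r)"
  assumes Qcase: "r < n - k \<Longrightarrow>
        EQ \<in> carrier_mat rQ rQ \<and> invertible_mat EQ \<and> perm_matrix (n - k) PiQ \<and>
        Qr \<in> carrier_mat rQ r \<and> EQ * Q * PiQ = append_cols_mat (1\<^sub>m rQ) Qr"
    and Qfull: "r = n - k \<Longrightarrow> PiQ = 1\<^sub>m (n - k)"
  defines "Qt \<equiv> (if r < n - k then Qr @\<^sub>r 1\<^sub>m r else 1\<^sub>m (n - k))"
    defines "e0 \<equiv> (if r < n - k then ((y \<^sub>v* transpose_mat Q) \<^sub>v* transpose_mat EQ) @\<^sub>v 0\<^sub>v r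
              else 0\<^sub>v (n - k))"
    defines "e \<equiv> (\<lambda>epri. ((epri \<^sub>v* transpose_mat Qt) + e0) \<^sub>v* transpose_mat PiQ)"
    defines "z \<equiv> (\<lambda>epri. (e epri + y) \<^sub>v* transpose_mat EP)"
    defines "xe \<equiv> (\<lambda>epri. if k \<le> n - k then vec_first (z epri) k
                        else z epri @\<^sub>v 0\<^sub>v (2 * k - n))"
    defines "Phi \<equiv> (\<lambda>(epri, t). ((xe epri + (t \<^sub>v* transpose_mat Pt)) \<^sub>v* transpose_mat PiP)
                             @\<^sub>v (y + e epri))"
  shows "bij_betw Phi (carrier_vec r \<times> carrier_vec (k - r)) (sys_code k Ptil)
         \<and> card (sys_code k Ptil) = 2 ^ k"
proof -
  have dims: "r + (n - k - r) = n - k" "r + (k - r) = k"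
    using arg_cong[OF EPblock, of dim_row] arg_cong[OF EPblock, of dim_col] EP(1) PiP
    unfolding perm_matrix_def by auto
  have Q: "Q \<in> carrier_mat (n - k - r) (n - k)"
    unfolding Q_def by simp
  have "inj_on e (carrier_vec r) \<and>
      (\<forall>epri \<in> carrier_vec r. e epri \<in> carrier_vec (n - k) \<and> Q *\<^sub>v e epri = Q *\<^sub>v y)"
    unfolding e_def Qt_def e0_def vm_transpose
    by (rule error_pattern_map[OF _ Q y Qcase[unfolded rQ_def] Qfull]) (use dims in simp)
  then have e_inj: "inj_on e (carrier_vec r)"
    and e_c: "\<And>epri. epri \<in> carrier_vec r \<Longrightarrow> e epri \<in> carrier_vec (n - k)"
    and syndrome: "\<And>epri. epri \<in> carrier_vec r \<Longrightarrow> Q *\<^sub>v e epri = Q *\<^sub>v y"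
    by blast+
  have tail: "z epri = vec_first (z epri) r @\<^sub>v 0\<^sub>v (n - k - r)" if epri: "epri \<in> carrier_vec r" for epri
  proof -
    have "Q *\<^sub>v (e epri + y) = 0\<^sub>v (n - k - r)"
      using mult_add_distrib_mat_vec[OF Q e_c[OF epri] y] syndrome[OF epri] bit_vec_add_self[of "Q *\<^sub>v y"] Q y
      by simp
    then show ?thesis
      using mult_vec_split_rows[of EP r "n - k - r" "n - k" "e epri + y"] EP(1) dims(1) e_c[OF epri] y
      unfolding z_def Q_def by simp
  qed
  have xe_eq: "xe epri = vec_first (z epri) r @\<^sub>v 0\<^sub>v (k - r)" if epri: "epri \<in> carrier_vec r" for epri
  proof -
    have "2 * k - n = k - (n - k)"
      using nk(1) by simp
    then show ?thesis
      using resize_zero_padded[of "vec_first (z epri) r" r k "n - k"] tail[OF epri] dims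
      unfolding xe_def by (metis vec_first_carrier le_add1)
  qed
  have "bij_betw Phi (carrier_vec r \<times> carrier_vec (k - r)) (sys_code k Ptil)"
    unfolding Phi_def vm_transpose Pt_def
    by (rule systematic_reencoding_bij_betw[OF EP Ptil PiP R _ EPblock y e_inj e_c])
      (use dims tail xe_eq in \<open>simp_all add: z_def\<close>)
  then show ?thesis
    by (simp add: card_sys_code card_bit_vec_carrier)
qed

end
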